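(* Let $q$ be an odd prime power, $\omega$ a non-square in $\mathbb F_q$, $\epsilon\in\mathbb F_{q^2}$ with $\epsilon^2=\omega$, and write $z=z_1+\epsilon z_2$ ($z_i\in\mathbb F_q$) for $z\in\mathbb F_{q^2}$. Let $a,b,c,d,e\in\mathbb F_{q^2}$ with $b\ne0$, $b_1d_2=b_2d_1$ and $(b_1,d_1)\ne(0,0)$; put $a'=b_1a_2-a_1b_2$, $c'=b_1c_2-b_2c_1$, $e'=b_1e_2-b_2e_1$, not all zero, $\delta'=c'^2-4a'e'$ and $\kappa=a'd_1^2-c'd_1b_1+e'b_1^2$. In $\mathrm{PG}(3,q)$ with coordinates $(t_1:t_2:X:Z)$ let $\Pi$ be the plane $b_1X+d_1Z=0$, $\mathcal Q$ the quadric $b_2t_1^2-2b_1t_1t_2+b_2\omega t_2^2+a'X^2+c'XZ+e'Z^2=0$, and $\mathcal Q_0$ the set of points of $\mathcal Q$ (in $\mathrm{PG}(3,q)$) with $t_1=t_2=0$. Then $\Pi$ meets $\mathcal Q_0$ if and only if $\kappa=0$, in which case $|\Pi\cap\mathcal Q_0|=1$. Furthermore, when $\delta'=0$, $\Pi\cap\mathcal Q_0$ is the vertex of the quadric cone $\mathcal Q$ if $a'\neq0$, and is empty if $a'=0$. *)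

theory Defs
  imports Main
begin

text \<open>Homogeneous coordinates (t1, t2, X, Z) of PG(3,q) over a field 'a.\<close>
type_synonym 'a vec4 = "'a \<times> 'a \<times> 'a \<times> 'a"

definition vadd4 :: "'a::field vec4 \<Rightarrow> 'a vec4 \<Rightarrow> 'a vec4" where
  "vadd4 v w = (case v of (t1, t2, x, z) \<Rightarrow> case w of (s1, s2, y, u) \<Rightarrow>
      (t1 + s1, t2 + s2, x + y, z + u))"

definition proj_pt :: "'a::field vec4 \<Rightarrow> 'a vec4 set" where
  "proj_pt v = (case v of (t1, t2, x, z) \<Rightarrow>
      {(l * t1, l * t2, l * x, l * z) | l. l \<noteq> 0})"

definition PG3 :: "'a::field vec4 set set" where
  "PG3 = {proj_pt v | v. v \<noteq> (0, 0, 0, 0)}"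

definition proj_zeros :: "('a::field vec4 \<Rightarrow> 'a) \<Rightarrow> 'a vec4 set set" where
  "proj_zeros F = {P \<in> PG3. \<forall>v\<in>P. F v = 0}"

text \<open>Singular points (vertex set) of the quadric defined by the quadratic form F:
  points of the quadric lying in the radical of the polar form.\<close>
definition quadric_sing :: "('a::field vec4 \<Rightarrow> 'a) \<Rightarrow> 'a vec4 set set" where
  "quadric_sing F = {P \<in> PG3. \<forall>v\<in>P. F v = 0 \<and>
      (\<forall>w. F (vadd4 v w) - F v - F w = 0)}"

end

theory Submission
  imports Defs "HOL-Library.Disjoint_Sets"
begin

text \<open>
  Q0 lies on the line t1 = t2 = 0, which meets the plane (b1 \<noteq> 0 by the hypotheses on b and d)
  in the single point W = (0 : 0 : d1 : -b1); W lies on the quadric iff a' X^2 + c' X Z + e' Z^2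
  vanishes at (d1, -b1), i.e. iff \<kappa> = 0. Since q is odd and \<omega> is a non-square, 2 is invertible
  and the binary form b2 t1^2 - 2 b1 t1 t2 + b2 \<omega> t2^2 has nonzero determinant b2^2 \<omega> - b1^2,
  so the radical of the polar form lies on the line t1 = t2 = 0; when \<delta>' = 0 and a' \<noteq> 0 it is
  spanned by (0, 0, c', -2a'). The identity 4 a' \<kappa> = (2 a' d1 - c' b1)^2 - \<delta>' b1^2 shows that
  this vertex is W as soon as \<kappa> = 0, and when \<delta>' = a' = 0 we get \<kappa> = e' b1^2 \<noteq> 0.
\<close>

lemma odd_card_two_neq_zero:
  assumes "odd (card (UNIV :: 'a::{ring_1,finite} set))"
  shows "(2::'a) \<noteq> 0"
proof
  assume two: "(2::'a) = 0"
  \<comment> \<open>then x \<mapsto> x + 1 is a fixed-point-free involution pairing off the summands\<close>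
  have "(\<Sum>x\<in>(UNIV::'a set). (1::'a)) = 0"
    by (rule sum_involution_eq_0[where h="\<lambda>x. x + 1"])
      (auto simp: two add.assoc one_add_one[symmetric])
  moreover obtain k where "card (UNIV::'a set) = 2 * k + 1"
    using assms oddE by blast
  ultimately show False
    using two by simp
qed

lemma nonsquare_norm_neq_zero:
  fixes \<omega> b1 b2 :: "'a::field"
  assumes "\<not> (\<exists>x. x * x = \<omega>)" and "(b1, b2) \<noteq> (0, 0)"
  shows "b1 * b1 \<noteq> b2 * b2 * \<omega>"
proof
  assume eq: "b1 * b1 = b2 * b2 * \<omega>"
  show False
  proof (cases "b2 = 0")
    case True
    then show False using eq assms(2) by simp
  next
    case False
    then have "(b1 / b2) * (b1 / b2) = \<omega>" using eq by (simp add: field_simps)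
    then show False using assms(1) by blast
  qed
qed

lemma proj_pt_iff:
  "v \<in> proj_pt (t1, t2, x, z) \<longleftrightarrow> (\<exists>l. l \<noteq> 0 \<and> v = (l * t1, l * t2, l * x, l * z))"
  unfolding proj_pt_def by auto

lemma proj_pt_self: "(t1, t2, x, z) \<in> proj_pt (t1, t2, x, z)"
  unfolding proj_pt_iff by (auto intro: exI[of _ 1])

lemma proj_pt_scale:
  fixes l :: "'a::field"
  assumes "l \<noteq> 0"
  shows "proj_pt (l * t1, l * t2, l * x, l * z) = proj_pt (t1, t2, x, z)"
proof (rule set_eqI)
  fix v
  have "(\<exists>m. m \<noteq> 0 \<and> v = (m * (l * t1), m * (l * t2), m * (l * x), m * (l * z)))
      \<longleftrightarrow> (\<exists>m. m \<noteq> 0 \<and> v = (m * t1, m * t2, m * x, m * z))"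
  proof
    assume "\<exists>m. m \<noteq> 0 \<and> v = (m * (l * t1), m * (l * t2), m * (l * x), m * (l * z))"
    then obtain m where "m \<noteq> 0" "v = (m * (l * t1), m * (l * t2), m * (l * x), m * (l * z))"
      by blast
    then show "\<exists>m. m \<noteq> 0 \<and> v = (m * t1, m * t2, m * x, m * z)"
      using assms by (intro exI[of _ "m * l"]) (auto simp: mult.assoc)
  next
    assume "\<exists>m. m \<noteq> 0 \<and> v = (m * t1, m * t2, m * x, m * z)"
    then obtain m where "m \<noteq> 0" "v = (m * t1, m * t2, m * x, m * z)" by blast
    then show "\<exists>m. m \<noteq> 0 \<and> v = (m * (l * t1), m * (l * t2), m * (l * x), m * (l * z))"
      using assms by (intro exI[of _ "m / l"]) auto
  qed
  then show "v \<in> proj_pt (l * t1, l * t2, l * x, l * z) \<longleftrightarrow> v \<in> proj_pt (t1, t2, x, z)"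
    unfolding proj_pt_iff .
qed

lemma PG3_cases:
  assumes "P \<in> PG3"
  obtains t1 t2 x z where "(t1, t2, x, z) \<noteq> (0::'a::field, 0, 0, 0)" "P = proj_pt (t1, t2, x, z)"
  using assms unfolding PG3_def by auto

lemma proj_pt_in_PG3: "(t1, t2, x, z) \<noteq> (0::'a::field, 0, 0, 0) \<Longrightarrow> proj_pt (t1, t2, x, z) \<in> PG3"
  unfolding PG3_def by auto

lemma proj_pt_line_iff:
  "v \<in> proj_pt (0, 0, x, z) \<longleftrightarrow> (\<exists>l. l \<noteq> 0 \<and> v = (0, 0, l * x, l * z))"
  unfolding proj_pt_iff by simp

lemma proj_pt_line_kernel:
  fixes p r x z :: "'a::field"
  assumes "p \<noteq> 0" and "p * x + r * z = 0" and "(x, z) \<noteq> (0, 0)"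
  shows "proj_pt (0, 0, x, z) = proj_pt (0, 0, r, - p)"
proof -
  define l where "l = - z / p"
  have "p * x = - (r * z)"
    using assms(2) by (simp add: eq_neg_iff_add_eq_0)
  then have "x = l * r" and "z = l * - p"
    using assms(1) unfolding l_def by (simp_all add: field_simps)
  moreover have "l \<noteq> 0"
    using assms calculation by auto
  ultimately show ?thesis
    using proj_pt_scale[of l 0 0 r "- p"] by simp
qed

lemma plane_inter_line_quadric:
  fixes F :: "'a::field vec4 \<Rightarrow> 'a" and a c e b d :: 'a
  assumes "b \<noteq> 0" and F_line: "\<And>x z. F (0, 0, x, z) = a * x^2 + c * x * z + e * z^2"
  shows "proj_zeros (\<lambda>(t1, t2, X, Z). b * X + d * Z)
           \<inter> {P \<in> proj_zeros F. \<forall>(t1, t2, X, Z)\<in>P. t1 = 0 \<and> t2 = 0}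
         = (if a * d^2 - c * d * b + e * b^2 = 0 then {proj_pt (0, 0, d, - b)} else {})"
    (is "?Plane \<inter> ?Q0 = (if ?\<kappa> = 0 then {?W} else {})")
proof -
  have F_W: "F (0, 0, l * d, l * - b) = l^2 * ?\<kappa>" for l
    by (simp add: F_line power2_eq_square algebra_simps)
  have mem_iff: "P \<in> ?Plane \<inter> ?Q0 \<longleftrightarrow> ?\<kappa> = 0 \<and> P = ?W" for P
  proof
    assume P: "P \<in> ?Plane \<inter> ?Q0"
    then have "P \<in> PG3"
      unfolding proj_zeros_def by auto
    then obtain t1 t2 x z where nz: "(t1, t2, x, z) \<noteq> (0, 0, 0, 0)"
      and P_eq: "P = proj_pt (t1, t2, x, z)"
      by (rule PG3_cases)
    have "t1 = 0" "t2 = 0" "b * x + d * z = 0"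
      using P proj_pt_self[of t1 t2 x z] unfolding P_eq proj_zeros_def by auto
    then have "P = ?W"
      using nz proj_pt_line_kernel[OF \<open>b \<noteq> 0\<close>] unfolding P_eq by auto
    moreover have "F (0, 0, d, - b) = 0"
      using P proj_pt_self[of 0 0 d "- b"] unfolding \<open>P = ?W\<close> proj_zeros_def by auto
    ultimately show "?\<kappa> = 0 \<and> P = ?W"
      using F_W[of 1] by simp
  next
    assume "?\<kappa> = 0 \<and> P = ?W"
    then have "?\<kappa> = 0" and "P = ?W" by auto
    have "?W \<in> PG3"
      using \<open>b \<noteq> 0\<close> by (intro proj_pt_in_PG3) auto
    moreover have "(case v of (t1, t2, X, Z) \<Rightarrow> b * X + d * Z) = 0 \<and> F v = 0
        \<and> (case v of (t1, t2, X, Z) \<Rightarrow> t1 = 0 \<and> t2 = 0)" if "v \<in> ?W" for v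
    proof -
      obtain l where v: "v = (0, 0, l * d, l * - b)"
        using \<open>v \<in> ?W\<close> unfolding proj_pt_line_iff by blast
      show ?thesis
        unfolding v F_W \<open>?\<kappa> = 0\<close> by (simp add: algebra_simps)
    qed
    ultimately show "P \<in> ?Plane \<inter> ?Q0"
      unfolding \<open>P = ?W\<close> proj_zeros_def by auto
  qed
  show ?thesis
    by (rule set_eqI) (simp only: mem_iff; simp)
qed

definition quadric_form :: "'a::field \<Rightarrow> 'a \<Rightarrow> 'a \<Rightarrow> 'a \<Rightarrow> 'a \<Rightarrow> 'a \<Rightarrow> 'a vec4 \<Rightarrow> 'a" where
  "quadric_form b1 b2 \<omega> a c e = (\<lambda>(t1, t2, X, Z). b2 * t1^2 - 2 * b1 * t1 * t2 + b2 * \<omega> * t2^2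
                 + a * X^2 + c * X * Z + e * Z^2)"

lemma polar_form_eq:
  fixes b1 b2 \<omega> a c e :: "'a::field"
  defines "F \<equiv> quadric_form b1 b2 \<omega> a c e"
  shows "F (vadd4 (t1, t2, x, z) (s1, s2, y, u)) - F (t1, t2, x, z) - F (s1, s2, y, u) =
    2 * b2 * t1 * s1 - 2 * b1 * (t1 * s2 + s1 * t2) + 2 * b2 * \<omega> * t2 * s2
    + 2 * a * x * y + c * (x * u + y * z) + 2 * e * z * u"
  unfolding F_def quadric_form_def vadd4_def by (simp add: power2_eq_square algebra_simps)

lemma radical_polar_form:
  fixes b1 b2 \<omega> a c e :: "'a::field"
  defines "F \<equiv> quadric_form b1 b2 \<omega> a c e"
  assumes "(2::'a) \<noteq> 0" and "b1 * b1 \<noteq> b2 * b2 * \<omega>"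
    and radical: "\<And>w. F (vadd4 (t1, t2, x, z) w) - F (t1, t2, x, z) - F w = 0"
  shows "t1 = 0" and "t2 = 0" and "2 * a * x + c * z = 0"
proof -
  note polar = radical[unfolded F_def, of "(_, _, _, _)", unfolded polar_form_eq]
  have g1: "b2 * t1 = b1 * t2"
    using polar[of 1 0 0 0] \<open>2 \<noteq> 0\<close> by (simp add: algebra_simps)
  have g2: "b1 * t1 = b2 * \<omega> * t2"
    using polar[of 0 1 0 0] \<open>2 \<noteq> 0\<close> by (simp add: algebra_simps)
  have "(b1 * b1 - b2 * b2 * \<omega>) * t2 = b1 * (b1 * t2) - b2 * (b2 * \<omega> * t2)"
    by (simp add: algebra_simps)
  also have "\<dots> = b1 * (b2 * t1) - b2 * (b1 * t1)"
    by (simp only: g1 g2)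
  also have "\<dots> = 0"
    by (simp add: algebra_simps)
  finally show "t2 = 0"
    using \<open>b1 * b1 \<noteq> b2 * b2 * \<omega>\<close> by simp
  moreover have "b1 \<noteq> 0 \<or> b2 \<noteq> 0"
    using \<open>b1 * b1 \<noteq> b2 * b2 * \<omega>\<close> by auto
  ultimately show "t1 = 0"
    using g1 g2 by auto
  show "2 * a * x + c * z = 0"
    using polar[of 0 0 1 0] by (simp add: algebra_simps)
qed

lemma quadric_sing_cone:
  fixes b1 b2 \<omega> a c e :: "'a::field"
  defines "F \<equiv> quadric_form b1 b2 \<omega> a c e"
  assumes two: "(2::'a) \<noteq> 0" and aniso: "b1 * b1 \<noteq> b2 * b2 * \<omega>"
    and "a \<noteq> 0" and disc: "c^2 = 4 * a * e"
  shows "quadric_sing F = {proj_pt (0, 0, c, - (2 * a))}"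
proof -
  have "2 * a \<noteq> 0" using two \<open>a \<noteq> 0\<close> by simp
  have "P \<in> quadric_sing F \<longleftrightarrow> P = proj_pt (0, 0, c, - (2 * a))" for P
  proof
    assume P: "P \<in> quadric_sing F"
    then have "P \<in> PG3"
      unfolding quadric_sing_def by auto
    then obtain t1 t2 x z where nz: "(t1, t2, x, z) \<noteq> (0, 0, 0, 0)"
      and P_eq: "P = proj_pt (t1, t2, x, z)"
      by (rule PG3_cases)
    have "\<And>w. F (vadd4 (t1, t2, x, z) w) - F (t1, t2, x, z) - F w = 0"
      using P proj_pt_self[of t1 t2 x z] unfolding P_eq quadric_sing_def by blast
    from radical_polar_form[OF two aniso this[unfolded F_def]]
    show "P = proj_pt (0, 0, c, - (2 * a))"
      using nz proj_pt_line_kernel[OF \<open>2 * a \<noteq> 0\<close>] unfolding P_eq by auto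
  next
    assume P_eq: "P = proj_pt (0, 0, c, - (2 * a))"
    have "F v = 0 \<and> (\<forall>w. F (vadd4 v w) - F v - F w = 0)" if "v \<in> P" for v
    proof -
      obtain l where v: "v = (0, 0, l * c, l * - (2 * a))"
        using \<open>v \<in> P\<close> unfolding P_eq proj_pt_line_iff by blast
      have "F v = l^2 * a * (4 * a * e - c^2)"
        unfolding v F_def quadric_form_def by (simp add: power2_eq_square algebra_simps)
      moreover have "F (vadd4 v w) - F v - F w = l * u * (c^2 - 4 * a * e)"
        if "w = (s1, s2, y, u)" for w s1 s2 y u
        unfolding v that F_def polar_form_eq by (simp add: quadric_form_def power2_eq_square algebra_simps)
      ultimately show ?thesis
        using disc by (metis prod_cases4 diff_self mult_zero_right)
    qed
    moreover have "P \<in> PG3"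
      unfolding P_eq using \<open>2 * a \<noteq> 0\<close> by (intro proj_pt_in_PG3) auto
    ultimately show "P \<in> quadric_sing F"
      unfolding quadric_sing_def by blast
  qed
  then show ?thesis by auto
qed

lemma square_binary_form_root:
  fixes a c e d b :: "'a::field"
  assumes "c^2 = 4 * a * e" and "a * d^2 - c * d * b + e * b^2 = 0"
  shows "2 * a * d + c * - b = 0"
proof -
  have "(2 * a * d - c * b)^2 = 4 * a * (a * d^2 - c * d * b + e * b^2) + (c^2 - 4 * a * e) * b^2"
    by (simp add: power2_eq_square algebra_simps)
  then show ?thesis
    using assms by simp
qed

theorem mainTheorem13:
  fixes \<omega> a1 a2 b1 b2 c1 c2 d1 d2 e1 e2 :: "'a::{field,finite}"
  assumes odd_q: "odd (card (UNIV :: 'a set))"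
    and nonsq: "\<not> (\<exists>x. x * x = \<omega>)"
    and b_nz: "(b1, b2) \<noteq> (0, 0)"
    and bd: "b1 * d2 = b2 * d1"
    and bd1: "(b1, d1) \<noteq> (0, 0)"
  defines "a' \<equiv> b1 * a2 - a1 * b2"
    and "c' \<equiv> b1 * c2 - b2 * c1"
    and "e' \<equiv> b1 * e2 - b2 * e1"
  assumes ace: "(a', c', e') \<noteq> (0, 0, 0)"
  defines "\<delta>' \<equiv> c'^2 - 4 * a' * e'"
    and "\<kappa> \<equiv> a' * d1^2 - c' * d1 * b1 + e' * b1^2"
    and "F \<equiv> (\<lambda>(t1, t2, X, Z). b2 * t1^2 - 2 * b1 * t1 * t2 + b2 * \<omega> * t2^2
                 + a' * X^2 + c' * X * Z + e' * Z^2)"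
    and "Plane \<equiv> proj_zeros (\<lambda>(t1, t2, X, Z). b1 * X + d1 * Z)"
  defines "Q \<equiv> proj_zeros F"
  defines "Q0 \<equiv> {P \<in> Q. \<forall>(t1, t2, X, Z)\<in>P. t1 = 0 \<and> t2 = 0}"
  shows "(Plane \<inter> Q0 \<noteq> {} \<longleftrightarrow> \<kappa> = 0)
       \<and> (\<kappa> = 0 \<longrightarrow> card (Plane \<inter> Q0) = 1)
       \<and> (\<delta>' = 0 \<longrightarrow>
            (a' \<noteq> 0 \<longrightarrow> (\<exists>V. quadric_sing F = {V})
                        \<and> Plane \<inter> Q0 \<subseteq> quadric_sing F
                        \<and> (\<kappa> = 0 \<longrightarrow> Plane \<inter> Q0 = quadric_sing F))
          \<and> (a' = 0 \<longrightarrow> Plane \<inter> Q0 = {}))"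
proof -
  have "b1 \<noteq> 0" using b_nz bd bd1 by auto
  have plane_section: "Plane \<inter> Q0 = (if \<kappa> = 0 then {proj_pt (0, 0, d1, - b1)} else {})"
    unfolding Plane_def Q0_def Q_def \<kappa>_def
    by (rule plane_inter_line_quadric[OF \<open>b1 \<noteq> 0\<close>]) (simp add: F_def)
  have F_eq: "F = quadric_form b1 b2 \<omega> a' c' e'"
    unfolding F_def quadric_form_def by (rule refl)
  have vertex: "quadric_sing F = {proj_pt (0, 0, c', - (2 * a'))}" if "\<delta>' = 0" "a' \<noteq> 0"
    unfolding F_eq using that odd_card_two_neq_zero[OF odd_q] nonsquare_norm_neq_zero[OF nonsq b_nz]
    by (intro quadric_sing_cone) (auto simp: \<delta>'_def)
  have vertex_on_plane: "proj_pt (0, 0, d1, - b1) = proj_pt (0, 0, c', - (2 * a'))"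
    if "\<delta>' = 0" "a' \<noteq> 0" "\<kappa> = 0"
    using that odd_card_two_neq_zero[OF odd_q] \<open>b1 \<noteq> 0\<close> square_binary_form_root[of c' a' e' d1 b1]
    by (intro proj_pt_line_kernel) (auto simp: \<delta>'_def \<kappa>_def)
  have "\<kappa> \<noteq> 0" if "\<delta>' = 0" "a' = 0"
    using that ace \<open>b1 \<noteq> 0\<close> by (auto simp: \<delta>'_def \<kappa>_def)
  then show ?thesis
    using plane_section vertex vertex_on_plane by auto
qed

end
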